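(* Let $\phi:[0,1]\to[0,1]$ be a measure-preserving map, $\mathcal H=L^2([0,1])$, $\Phi_\phi:\mathcal H\to\mathcal H$, $\Phi_\phi(f)=f\circ\phi$, and let $B$ be a bounded linear operator on $\mathcal H$. Then there is a unique bounded linear operator $B^\phi$ on $\mathcal H$ such that $B^\phi(f\circ\phi)=(Bf)\circ\phi$ for all $f\in\mathcal H$ and $B^\phi=0$ on $\Phi_\phi(\mathcal H)^\perp$. *)

theory Defs
  imports "HOL-Analysis.Analysis"
begin

abbreviation I01 :: "real measure" where
  "I01 \<equiv> lebesgue_on {0..1}"

definition meas_pres :: "(real \<Rightarrow> real) \<Rightarrow> bool" where
  "meas_pres \<phi> \<longleftrightarrow> \<phi> \<in> measurable I01 I01 \<and> distr I01 I01 \<phi> = I01"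

text \<open>Representatives of elements of H = L^2([0,1]) (complex-valued);
  elements of H are classes modulo a.e. equality.\<close>
definition L2 :: "(real \<Rightarrow> complex) \<Rightarrow> bool" where
  "L2 f \<longleftrightarrow> f \<in> borel_measurable I01 \<and> integrable I01 (\<lambda>x. (norm (f x))\<^sup>2)"

definition ae_eq :: "(real \<Rightarrow> complex) \<Rightarrow> (real \<Rightarrow> complex) \<Rightarrow> bool" where
  "ae_eq f g \<longleftrightarrow> (AE x in I01. f x = g x)"

definition L2_inner :: "(real \<Rightarrow> complex) \<Rightarrow> (real \<Rightarrow> complex) \<Rightarrow> complex" where
  "L2_inner f g = (LINT x|I01. f x * cnj (g x))"

definition L2_norm :: "(real \<Rightarrow> complex) \<Rightarrow> real" where
  "L2_norm f = sqrt (LINT x|I01. (norm (f x))\<^sup>2)"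

definition bounded_op :: "((real \<Rightarrow> complex) \<Rightarrow> (real \<Rightarrow> complex)) \<Rightarrow> bool" where
  "bounded_op B \<longleftrightarrow>
     (\<forall>f. L2 f \<longrightarrow> L2 (B f)) \<and>
     (\<forall>f g. L2 f \<longrightarrow> L2 g \<longrightarrow> ae_eq f g \<longrightarrow> ae_eq (B f) (B g)) \<and>
     (\<forall>f g a b. L2 f \<longrightarrow> L2 g \<longrightarrow>
        ae_eq (B (\<lambda>x. a * f x + b * g x)) (\<lambda>x. a * B f x + b * B g x)) \<and>
     (\<exists>C. \<forall>f. L2 f \<longrightarrow> L2_norm (B f) \<le> C * L2_norm f)"

definition koopman_perp :: "(real \<Rightarrow> real) \<Rightarrow> (real \<Rightarrow> complex) set" where
  "koopman_perp \<phi> = {g. L2 g \<and> (\<forall>f. L2 f \<longrightarrow> L2_inner (f \<circ> \<phi>) g = 0)}"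

definition lifted_op ::
  "(real \<Rightarrow> real) \<Rightarrow> ((real \<Rightarrow> complex) \<Rightarrow> (real \<Rightarrow> complex)) \<Rightarrow>
   ((real \<Rightarrow> complex) \<Rightarrow> (real \<Rightarrow> complex)) \<Rightarrow> bool" where
  "lifted_op \<phi> B B' \<longleftrightarrow> bounded_op B' \<and>
     (\<forall>f. L2 f \<longrightarrow> ae_eq (B' (f \<circ> \<phi>)) (B f \<circ> \<phi>)) \<and>
     (\<forall>g \<in> koopman_perp \<phi>. ae_eq (B' g) (\<lambda>x. 0))"

end

theory Submission
  imports Defs "HOL-Probability.Conditional_Expectation"
begin

text \<open>Let \<open>F\<close> be the \<sigma>-algebra generated by \<open>\<phi>\<close>. By the Doob--Dynkin lemma the \<open>F\<close>-measurable
  functions are exactly those of the form \<open>h \<circ> \<phi>\<close>, so the range of the Koopman operator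
  \<open>\<Phi>\<^sub>\<phi>\<close> is \<open>L\<^sup>2(F)\<close>, and the orthogonal projection onto it is the conditional expectation
  with respect to \<open>F\<close>. Write this projection of \<open>g\<close> as \<open>(Q g) \<circ> \<phi>\<close>; since \<open>\<Phi>\<^sub>\<phi>\<close> is an
  isometry, \<open>Q g\<close> is unique almost everywhere, and \<open>Q\<close> is linear and contractive. Then
  \<open>B\<^sup>\<phi> g = (B (Q g)) \<circ> \<phi>\<close> has the required properties, and it is the only such operator
  because every \<open>g\<close> is the sum of \<open>(Q g) \<circ> \<phi>\<close> and an element of \<open>\<Phi>\<^sub>\<phi>(H)\<^sup>\<bottom>\<close>.\<close>

section \<open>Measurable factorisation and conditional expectation\<close>

lemma borel_measurable_vimage_algebra_factor_nonneg:
  fixes u :: "'a \<Rightarrow> real"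
  assumes \<phi>: "\<phi> \<in> X \<rightarrow> space N"
    and u: "u \<in> borel_measurable (vimage_algebra X \<phi> N)" "\<And>x. 0 \<le> u x"
  shows "\<exists>h \<in> borel_measurable N. \<forall>x\<in>X. u x = h (\<phi> x)"
  using u
proof (induction rule: borel_measurable_induct_real)
  case (set A)
  then obtain B where B: "B \<in> sets N" "A = \<phi> -` B \<inter> X"
    using sets_vimage_algebra2[OF \<phi>] by auto
  show ?case
    by (rule bexI[of _ "indicator B"]) (auto simp: B indicator_def intro: borel_measurable_indicator)
next
  case (mult u c)
  then obtain h where "h \<in> borel_measurable N" "\<forall>x\<in>X. u x = h (\<phi> x)" by blast
  then show ?case by (intro bexI[of _ "\<lambda>y. c * h y"]) auto
next
  case (add u v)
  then obtain h g where "h \<in> borel_measurable N" "\<forall>x\<in>X. u x = h (\<phi> x)"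
    and "g \<in> borel_measurable N" "\<forall>x\<in>X. v x = g (\<phi> x)" by metis
  then show ?case by (intro bexI[of _ "\<lambda>y. g y + h y"]) auto
next
  case (seq U)
  then obtain H where H: "\<And>i. H i \<in> borel_measurable N" "\<And>i x. x \<in> X \<Longrightarrow> U i x = H i (\<phi> x)"
    by metis
  show ?case
  proof (rule bexI[of _ "\<lambda>y. lim (\<lambda>i. H i y)"])
    show "(\<lambda>y. lim (\<lambda>i. H i y)) \<in> borel_measurable N" using H(1) by measurable
    show "\<forall>x\<in>X. u x = lim (\<lambda>i. H i (\<phi> x))"
    proof
      fix x assume "x \<in> X"
      then have "(\<lambda>i. H i (\<phi> x)) \<longlonglongrightarrow> u x" using seq(4)[of x] H(2) by simp
      then show "u x = lim (\<lambda>i. H i (\<phi> x))" by (simp add: limI)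
    qed
  qed
qed

lemma borel_measurable_vimage_algebra_factor:
  fixes u :: "'a \<Rightarrow> real"
  assumes \<phi>: "\<phi> \<in> X \<rightarrow> space N"
    and u: "u \<in> borel_measurable (vimage_algebra X \<phi> N)"
  obtains h where "h \<in> borel_measurable N" "\<And>x. x \<in> X \<Longrightarrow> u x = h (\<phi> x)"
proof -
  have pos: "(\<lambda>x. max (u x) 0) \<in> borel_measurable (vimage_algebra X \<phi> N)"
    and neg: "(\<lambda>x. max (- u x) 0) \<in> borel_measurable (vimage_algebra X \<phi> N)"
    using u by measurable
  obtain h1 where h1: "h1 \<in> borel_measurable N" "\<forall>x\<in>X. max (u x) 0 = h1 (\<phi> x)"
    using borel_measurable_vimage_algebra_factor_nonneg[OF \<phi> pos] by auto
  obtain h2 where h2: "h2 \<in> borel_measurable N" "\<forall>x\<in>X. max (- u x) 0 = h2 (\<phi> x)"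
    using borel_measurable_vimage_algebra_factor_nonneg[OF \<phi> neg] by auto
  show ?thesis
  proof
    show "(\<lambda>y. h1 y - h2 y) \<in> borel_measurable N" using h1(1) h2(1) by measurable
    fix x assume "x \<in> X"
    moreover have "u x = max (u x) 0 - max (- u x) 0" by (simp add: max_def)
    ultimately show "u x = h1 (\<phi> x) - h2 (\<phi> x)" using h1(2) h2(2) by simp
  qed
qed

lemma (in sigma_finite_subalgebra) real_cond_exp_residual_orthogonal:
  assumes "integrable M (\<lambda>x. c x * v x)" "c \<in> borel_measurable F" "v \<in> borel_measurable M"
  shows "(\<integral>x. c x * (v x - real_cond_exp M F v x) \<partial>M) = 0"
proof -
  have "(\<lambda>x. c x * (v x - real_cond_exp M F v x)) = (\<lambda>x. c x * v x - c x * real_cond_exp M F v x)"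
    by (simp add: algebra_simps)
  then show ?thesis using assms real_cond_exp_intg[OF assms] by simp
qed

section \<open>Square-integrable functions on the unit interval\<close>

lemma integrable_mult_square_integrable:
  fixes p q :: "'a \<Rightarrow> real"
  assumes "p \<in> borel_measurable M" "q \<in> borel_measurable M"
    and "integrable M (\<lambda>x. (p x)\<^sup>2)" "integrable M (\<lambda>x. (q x)\<^sup>2)"
  shows "integrable M (\<lambda>x. p x * q x)"
proof (rule Bochner_Integration.integrable_bound)
  show "integrable M (\<lambda>x. (p x)\<^sup>2 + (q x)\<^sup>2)" using assms(3,4) by simp
  show "(\<lambda>x. p x * q x) \<in> borel_measurable M" using assms(1,2) by measurable
  show "AE x in M. norm (p x * q x) \<le> norm ((p x)\<^sup>2 + (q x)\<^sup>2)"
  proof (rule AE_I2)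
    fix x
    have "2 * (\<bar>p x\<bar> * \<bar>q x\<bar>) \<le> (p x)\<^sup>2 + (q x)\<^sup>2"
      using sum_squares_bound[of "\<bar>p x\<bar>" "\<bar>q x\<bar>"] by simp
    moreover have "0 \<le> \<bar>p x\<bar> * \<bar>q x\<bar>" by simp
    ultimately have "\<bar>p x\<bar> * \<bar>q x\<bar> \<le> (p x)\<^sup>2 + (q x)\<^sup>2" by linarith
    then show "norm (p x * q x) \<le> norm ((p x)\<^sup>2 + (q x)\<^sup>2)" by (simp add: abs_mult)
  qed
qed

lemma borel_measurable_cnj[measurable]:
  "g \<in> borel_measurable M \<Longrightarrow> (\<lambda>x. cnj (g x)) \<in> borel_measurable M"
  by (rule borel_measurable_continuous_on[where f=cnj]) (auto intro: continuous_on_cnj)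

lemma finite_measure_I01: "finite_measure I01"
  by (rule finite_measure_lebesgue_on) simp

lemma L2_measurable: "L2 f \<Longrightarrow> f \<in> borel_measurable I01"
  by (simp add: L2_def)

lemma L2_square_integrable: "L2 f \<Longrightarrow> integrable I01 (\<lambda>x. (norm (f x))\<^sup>2)"
  by (simp add: L2_def)

lemma L2_square_integrable_Re:
  assumes "L2 f"
  shows "integrable I01 (\<lambda>x. (Re (f x))\<^sup>2)"
proof (rule Bochner_Integration.integrable_bound[OF L2_square_integrable[OF assms]])
  show "(\<lambda>x. (Re (f x))\<^sup>2) \<in> borel_measurable I01" using L2_measurable[OF assms] by measurable
qed (auto simp: cmod_power2)

lemma L2_square_integrable_Im:
  assumes "L2 f"
  shows "integrable I01 (\<lambda>x. (Im (f x))\<^sup>2)"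
proof (rule Bochner_Integration.integrable_bound[OF L2_square_integrable[OF assms]])
  show "(\<lambda>x. (Im (f x))\<^sup>2) \<in> borel_measurable I01" using L2_measurable[OF assms] by measurable
qed (auto simp: cmod_power2)

lemma L2_zero: "L2 (\<lambda>x. 0)"
  by (simp add: L2_def)

lemma L2_lincomb:
  assumes "L2 f" "L2 g"
  shows "L2 (\<lambda>x. a * f x + b * g x)"
proof -
  have [measurable]: "f \<in> borel_measurable I01" "g \<in> borel_measurable I01"
    using assms by (simp_all add: L2_measurable)
  define bound where
    "bound x = 2 * (norm a)\<^sup>2 * (norm (f x))\<^sup>2 + 2 * (norm b)\<^sup>2 * (norm (g x))\<^sup>2" for x
  have le_bound: "(norm (a * f x + b * g x))\<^sup>2 \<le> bound x" for x
  proof -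
    define A B where "A = norm a * norm (f x)" and "B = norm b * norm (g x)"
    have "norm (a * f x + b * g x) \<le> A + B"
      unfolding A_def B_def by (metis norm_mult norm_triangle_ineq)
    then have "(norm (a * f x + b * g x))\<^sup>2 \<le> (A + B)\<^sup>2"
      by (rule power_mono) simp
    also have "\<dots> \<le> 2 * A\<^sup>2 + 2 * B\<^sup>2"
      using sum_squares_bound[of A B] unfolding power2_sum by linarith
    finally show ?thesis unfolding A_def B_def bound_def by (simp add: power_mult_distrib)
  qed
  show ?thesis unfolding L2_def
  proof
    show "(\<lambda>x. a * f x + b * g x) \<in> borel_measurable I01" by measurable
    show "integrable I01 (\<lambda>x. (norm (a * f x + b * g x))\<^sup>2)"
    proof (rule Bochner_Integration.integrable_bound)
      show "integrable I01 bound"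
        using assms unfolding bound_def by (simp add: L2_square_integrable)
      show "AE x in I01. norm ((norm (a * f x + b * g x))\<^sup>2) \<le> norm (bound x)"
        using order_trans[OF le_bound abs_ge_self] by (intro AE_I2) simp
    qed measurable
  qed
qed

lemma L2_diff: "L2 f \<Longrightarrow> L2 g \<Longrightarrow> L2 (\<lambda>x. f x - g x)"
  using L2_lincomb[of f g 1 "-1"] by simp

lemma L2_inner_integrable:
  assumes "L2 f" "L2 g"
  shows "integrable I01 (\<lambda>x. f x * cnj (g x))"
proof -
  have [measurable]: "f \<in> borel_measurable I01" "g \<in> borel_measurable I01"
    using assms by (simp_all add: L2_measurable)
  have "integrable I01 (\<lambda>x. norm (f x) * norm (g x))"
    using assms by (intro integrable_mult_square_integrable) (simp_all add: L2_square_integrable)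
  then show ?thesis
    by (subst integrable_norm_iff[symmetric]) (simp_all add: norm_mult)
qed

lemma L2_inner_lincomb_right:
  assumes "L2 f" "L2 g1" "L2 g2"
  shows "L2_inner f (\<lambda>x. a * g1 x + b * g2 x) = cnj a * L2_inner f g1 + cnj b * L2_inner f g2"
proof -
  have "(\<lambda>x. f x * cnj (a * g1 x + b * g2 x)) =
        (\<lambda>x. cnj a * (f x * cnj (g1 x)) + cnj b * (f x * cnj (g2 x)))"
    by (simp add: algebra_simps)
  then show ?thesis
    using L2_inner_integrable[OF assms(1,2)] L2_inner_integrable[OF assms(1,3)]
    by (simp add: L2_inner_def)
qed

lemma L2_pythagoras:
  assumes "L2 u" "L2 w" "L2_inner u w = 0"
  shows "(LINT x|I01. (norm (u x + w x))\<^sup>2) = (LINT x|I01. (norm (u x))\<^sup>2) + (LINT x|I01. (norm (w x))\<^sup>2)"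
proof -
  define r where "r x = Re (u x * cnj (w x))" for x
  have "(norm (u x + w x))\<^sup>2 = (norm (u x))\<^sup>2 + (norm (w x))\<^sup>2 + 2 * r x" for x
    unfolding cmod_power2 r_def by (simp add: power2_eq_square algebra_simps)
  then have "(LINT x|I01. (norm (u x + w x))\<^sup>2) = (LINT x|I01. (norm (u x))\<^sup>2 + (norm (w x))\<^sup>2 + 2 * r x)"
    by simp
  also have "\<dots> = (LINT x|I01. (norm (u x))\<^sup>2) + (LINT x|I01. (norm (w x))\<^sup>2) + 2 * (LINT x|I01. r x)"
  proof -
    have "integrable I01 r"
      unfolding r_def by (rule integrable_Re[OF L2_inner_integrable[OF assms(1,2)]])
    then show ?thesis
      using L2_square_integrable[OF assms(1)] L2_square_integrable[OF assms(2)]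
      by (simp add: Bochner_Integration.integral_add)
  qed
  also have "(LINT x|I01. r x) = Re (L2_inner u w)"
    unfolding r_def L2_inner_def by (rule integral_Re[OF L2_inner_integrable[OF assms(1,2)]])
  finally show ?thesis using assms(3) by simp
qed

lemma L2_norm_nonneg: "0 \<le> L2_norm f"
  unfolding L2_norm_def by (simp add: integral_nonneg_AE)

lemma L2_norm_le_of_orthogonal:
  assumes "L2 g" "L2 u" "L2_inner u (\<lambda>x. g x - u x) = 0"
  shows "L2_norm u \<le> L2_norm g"
proof -
  have "(LINT x|I01. (norm (g x))\<^sup>2) = (LINT x|I01. (norm (u x))\<^sup>2) + (LINT x|I01. (norm (g x - u x))\<^sup>2)"
    using L2_pythagoras[OF assms(2) L2_diff[OF assms(1,2)] assms(3)] by simp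
  moreover have "0 \<le> (LINT x|I01. (norm (g x - u x))\<^sup>2)" by (simp add: integral_nonneg_AE)
  ultimately show ?thesis unfolding L2_norm_def by simp
qed

lemma L2_inner_self: "L2_inner f f = complex_of_real (LINT x|I01. (norm (f x))\<^sup>2)"
proof -
  have "L2_inner f f = (CLINT x|I01. complex_of_real ((norm (f x))\<^sup>2))"
    unfolding L2_inner_def by (intro Bochner_Integration.integral_cong refl) (rule complex_norm_square[symmetric])
  then show ?thesis by (simp only: integral_complex_of_real)
qed

lemma ae_eq_trans [trans]: "ae_eq f g \<Longrightarrow> ae_eq g k \<Longrightarrow> ae_eq f k"
  unfolding ae_eq_def by (auto elim: AE_mp)

lemma bounded_op_L2: "bounded_op B \<Longrightarrow> L2 f \<Longrightarrow> L2 (B f)"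
  unfolding bounded_op_def by blast

lemma bounded_op_ae_cong: "bounded_op B \<Longrightarrow> L2 f \<Longrightarrow> L2 g \<Longrightarrow> ae_eq f g \<Longrightarrow> ae_eq (B f) (B g)"
  unfolding bounded_op_def by blast

lemma bounded_op_lincomb:
  "bounded_op B \<Longrightarrow> L2 f \<Longrightarrow> L2 g \<Longrightarrow> ae_eq (B (\<lambda>x. a * f x + b * g x)) (\<lambda>x. a * B f x + b * B g x)"
  unfolding bounded_op_def by blast

lemma bounded_op_zero: "bounded_op B \<Longrightarrow> ae_eq (B (\<lambda>x. 0)) (\<lambda>x. 0)"
  using bounded_op_lincomb[OF _ L2_zero L2_zero, of B 0 0] by simp

section \<open>The Koopman operator of a measure-preserving map\<close>

lemma koopman_perp_L2: "g \<in> koopman_perp \<phi> \<Longrightarrow> L2 g"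
  by (simp add: koopman_perp_def)

abbreviation koopman_algebra :: "(real \<Rightarrow> real) \<Rightarrow> real measure" where
  "koopman_algebra \<phi> \<equiv> vimage_algebra {0..1} \<phi> I01"

text \<open>\<open>koopman_proj \<phi> g \<circ> \<phi>\<close> is the orthogonal projection of \<open>g\<close> onto the range of the
  Koopman operator; \<open>koopman_proj \<phi> g\<close> is determined only up to a.e. equality.\<close>
definition koopman_proj :: "(real \<Rightarrow> real) \<Rightarrow> (real \<Rightarrow> complex) \<Rightarrow> real \<Rightarrow> complex" where
  "koopman_proj \<phi> g = (SOME h. L2 h \<and> (\<lambda>x. g x - h (\<phi> x)) \<in> koopman_perp \<phi>)"

definition koopman_lift ::
  "(real \<Rightarrow> real) \<Rightarrow> ((real \<Rightarrow> complex) \<Rightarrow> (real \<Rightarrow> complex)) \<Rightarrow> (real \<Rightarrow> complex) \<Rightarrow> real \<Rightarrow> complex"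
  where "koopman_lift \<phi> B g = B (koopman_proj \<phi> g) \<circ> \<phi>"

context
  fixes \<phi> :: "real \<Rightarrow> real"
  assumes meas_pres: "meas_pres \<phi>"
begin

lemma measurable_meas_pres: "\<phi> \<in> measurable I01 I01"
  using meas_pres by (simp add: meas_pres_def)

lemma distr_meas_pres: "distr I01 I01 \<phi> = I01"
  using meas_pres by (simp add: meas_pres_def)

lemma integral_comp_meas_pres:
  fixes u :: "real \<Rightarrow> 'b::{banach, second_countable_topology}"
  assumes "u \<in> borel_measurable I01"
  shows "integral\<^sup>L I01 (\<lambda>x. u (\<phi> x)) = integral\<^sup>L I01 u"
  using integral_distr[OF measurable_meas_pres assms] distr_meas_pres by simp

lemma integrable_comp_meas_pres_iff:
  fixes u :: "real \<Rightarrow> 'b::{banach, second_countable_topology}"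
  assumes "u \<in> borel_measurable I01"
  shows "integrable I01 (\<lambda>x. u (\<phi> x)) \<longleftrightarrow> integrable I01 u"
  using integrable_distr_eq[OF measurable_meas_pres assms] distr_meas_pres by simp

lemma L2_comp:
  assumes "L2 f"
  shows "L2 (f \<circ> \<phi>)"
proof -
  have [measurable]: "f \<in> borel_measurable I01" using assms by (rule L2_measurable)
  have "integrable I01 (\<lambda>x. (norm (f (\<phi> x)))\<^sup>2)"
    using L2_square_integrable[OF assms] by (subst integrable_comp_meas_pres_iff) simp_all
  then show ?thesis
    unfolding L2_def using measurable_comp[OF measurable_meas_pres L2_measurable[OF assms]] by simp
qed

lemma L2_norm_comp:
  assumes "L2 f"
  shows "L2_norm (f \<circ> \<phi>) = L2_norm f"
proof -
  have "(\<lambda>y. (norm (f y))\<^sup>2) \<in> borel_measurable I01" using L2_measurable[OF assms] by measurable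
  from integral_comp_meas_pres[OF this] show ?thesis by (simp add: L2_norm_def)
qed

lemma ae_eq_comp_iff:
  assumes "f \<in> borel_measurable I01" "g \<in> borel_measurable I01"
  shows "ae_eq (f \<circ> \<phi>) (g \<circ> \<phi>) \<longleftrightarrow> ae_eq f g"
proof -
  have "{x \<in> space I01. f x = g x} \<in> sets I01" using assms by measurable
  from AE_distr_iff[OF measurable_meas_pres this, unfolded distr_meas_pres] show ?thesis
    by (simp add: ae_eq_def)
qed

lemma ae_eq_comp: "L2 f \<Longrightarrow> L2 g \<Longrightarrow> ae_eq f g \<Longrightarrow> ae_eq (f \<circ> \<phi>) (g \<circ> \<phi>)"
  by (simp add: ae_eq_comp_iff L2_measurable)

lemma koopman_perp_lincomb:
  "g1 \<in> koopman_perp \<phi> \<Longrightarrow> g2 \<in> koopman_perp \<phi> \<Longrightarrow> (\<lambda>x. a * g1 x + b * g2 x) \<in> koopman_perp \<phi>"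
  unfolding koopman_perp_def by (simp add: L2_lincomb L2_inner_lincomb_right L2_comp)

lemma koopman_perp_ae_cong:
  assumes g: "g \<in> koopman_perp \<phi>" and g': "L2 g'" and "ae_eq g g'"
  shows "g' \<in> koopman_perp \<phi>"
  unfolding koopman_perp_def
proof (intro CollectI conjI allI impI g')
  fix f assume f: "L2 f"
  have [measurable]: "(\<lambda>x. f (\<phi> x)) \<in> borel_measurable I01"
      "g \<in> borel_measurable I01" "g' \<in> borel_measurable I01"
    using L2_measurable[OF L2_comp[OF f]] g g' by (simp_all add: comp_def L2_measurable koopman_perp_L2)
  have "AE x in I01. f (\<phi> x) * cnj (g' x) = f (\<phi> x) * cnj (g x)"
    using \<open>ae_eq g g'\<close> unfolding ae_eq_def by (auto elim: AE_mp)
  then have "L2_inner (f \<circ> \<phi>) g' = L2_inner (f \<circ> \<phi>) g"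
    unfolding L2_inner_def comp_def by (intro integral_cong_AE) measurable
  also have "\<dots> = 0" using g f unfolding koopman_perp_def by auto
  finally show "L2_inner (f \<circ> \<phi>) g' = 0" .
qed

lemma koopman_perp_comp_ae_zero:
  assumes u: "L2 u" and perp: "u \<circ> \<phi> \<in> koopman_perp \<phi>"
  shows "ae_eq u (\<lambda>x. 0)"
proof -
  have "L2_inner (u \<circ> \<phi>) (u \<circ> \<phi>) = 0" using perp u unfolding koopman_perp_def by auto
  then have "(LINT x|I01. (norm ((u \<circ> \<phi>) x))\<^sup>2) = 0" by (simp add: L2_inner_self)
  then have "AE x in I01. (norm ((u \<circ> \<phi>) x))\<^sup>2 = 0"
    using integral_nonneg_eq_0_iff_AE[OF L2_square_integrable[OF L2_comp[OF u]]] by simp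
  then have "ae_eq (u \<circ> \<phi>) ((\<lambda>x. 0) \<circ> \<phi>)" unfolding ae_eq_def by simp
  then show ?thesis using ae_eq_comp_iff[OF L2_measurable[OF u] borel_measurable_const] by simp
qed

lemma koopman_decomposition_unique:
  assumes h: "L2 h" and h': "L2 h'"
    and "(\<lambda>x. g x - h (\<phi> x)) \<in> koopman_perp \<phi>" "(\<lambda>x. g x - h' (\<phi> x)) \<in> koopman_perp \<phi>"
  shows "ae_eq h h'"
proof -
  have "(\<lambda>x. 1 * (g x - h (\<phi> x)) + (-1) * (g x - h' (\<phi> x))) \<in> koopman_perp \<phi>"
    using assms(3,4) by (rule koopman_perp_lincomb)
  moreover have "(\<lambda>x. 1 * (g x - h (\<phi> x)) + (-1) * (g x - h' (\<phi> x))) = (\<lambda>y. h' y - h y) \<circ> \<phi>"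
    by (auto simp: algebra_simps)
  ultimately have "ae_eq (\<lambda>y. h' y - h y) (\<lambda>x. 0)"
    using koopman_perp_comp_ae_zero[OF L2_diff[OF h' h]] by simp
  then show ?thesis unfolding ae_eq_def by (auto elim: AE_mp)
qed

lemma finite_measure_subalgebra_koopman: "finite_measure_subalgebra I01 (koopman_algebra \<phi>)"
proof -
  have "subalgebra I01 (koopman_algebra \<phi>)"
    unfolding subalgebra_def using sets_image_in_sets[OF _ measurable_meas_pres] by simp
  then show ?thesis using finite_measure_I01
    by (simp add: finite_measure_subalgebra_def finite_measure_subalgebra_axioms_def)
qed

lemma measurable_koopman_algebra: "\<phi> \<in> measurable (koopman_algebra \<phi>) I01"
  using measurable_space[OF measurable_meas_pres] by (intro measurable_vimage_algebra1) auto

lemma real_cond_exp_koopman_factor: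
  assumes v: "v \<in> borel_measurable I01" "integrable I01 (\<lambda>x. (v x)\<^sup>2)"
  obtains h where "h \<in> borel_measurable I01" "integrable I01 (\<lambda>y. (h y)\<^sup>2)"
    "\<And>x. x \<in> {0..1} \<Longrightarrow> real_cond_exp I01 (koopman_algebra \<phi>) v x = h (\<phi> x)"
proof -
  interpret finite_measure_subalgebra I01 "koopman_algebra \<phi>"
    by (rule finite_measure_subalgebra_koopman)
  have "\<phi> \<in> {0..1} \<rightarrow> space I01" using measurable_space[OF measurable_meas_pres] by simp
  then obtain h where h: "h \<in> borel_measurable I01"
    and factor: "\<And>x. x \<in> {0..1} \<Longrightarrow> real_cond_exp I01 (koopman_algebra \<phi>) v x = h (\<phi> x)"
    using borel_measurable_cond_exp[where M=I01 and f=v] by (rule borel_measurable_vimage_algebra_factor) blast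
  have "integrable I01 (\<lambda>x. (real_cond_exp I01 (koopman_algebra \<phi>) v x)\<^sup>2)"
  proof (rule integrable_convex_cond_exp[where I=UNIV and q=power2])
    show "integrable I01 v" using v by (rule square_integrable_imp_integrable)
  qed (use v convex_power2 in simp_all)
  also have "?this \<longleftrightarrow> integrable I01 (\<lambda>x. (h (\<phi> x))\<^sup>2)"
    by (rule Bochner_Integration.integrable_cong) (simp_all add: factor)
  also have "\<dots> \<longleftrightarrow> integrable I01 (\<lambda>y. (h y)\<^sup>2)"
    using h by (intro integrable_comp_meas_pres_iff) measurable
  finally have "integrable I01 (\<lambda>y. (h y)\<^sup>2)" .
  with h factor show ?thesis by (intro that)
qed

text \<open>Conditional expectation yields orthogonality against real \<open>koopman_algebra \<phi>\<close>-measurable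
  functions; this suffices because the real and imaginary parts of every \<open>f \<circ> \<phi>\<close> are such.\<close>
lemma koopman_perpI:
  assumes w: "L2 w"
    and Re_orth: "\<And>c. c \<in> borel_measurable (koopman_algebra \<phi>) \<Longrightarrow> integrable I01 (\<lambda>x. (c x)\<^sup>2) \<Longrightarrow>
               integral\<^sup>L I01 (\<lambda>x. c x * Re (w x)) = 0"
    and Im_orth: "\<And>c. c \<in> borel_measurable (koopman_algebra \<phi>) \<Longrightarrow> integrable I01 (\<lambda>x. (c x)\<^sup>2) \<Longrightarrow>
               integral\<^sup>L I01 (\<lambda>x. c x * Im (w x)) = 0"
  shows "w \<in> koopman_perp \<phi>"
  unfolding koopman_perp_def
proof (intro CollectI conjI allI impI w)
  fix f assume f: "L2 f"
  define a b where "a x = Re (f (\<phi> x))" and "b x = Im (f (\<phi> x))" for x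
  have [measurable]: "f \<in> borel_measurable I01" "w \<in> borel_measurable I01"
      "\<phi> \<in> measurable I01 I01" "\<phi> \<in> measurable (koopman_algebra \<phi>) I01"
    using f w by (simp_all add: L2_measurable measurable_meas_pres measurable_koopman_algebra)
  have aF: "a \<in> borel_measurable (koopman_algebra \<phi>)" and bF: "b \<in> borel_measurable (koopman_algebra \<phi>)"
    unfolding a_def b_def by measurable
  have a2: "integrable I01 (\<lambda>x. (a x)\<^sup>2)" and b2: "integrable I01 (\<lambda>x. (b x)\<^sup>2)"
    using L2_square_integrable_Re[OF L2_comp[OF f]] L2_square_integrable_Im[OF L2_comp[OF f]]
    by (simp_all add: a_def b_def)
  have [measurable]: "a \<in> borel_measurable I01" "b \<in> borel_measurable I01"
    unfolding a_def b_def by measurable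
  have "integrable I01 (\<lambda>x. a x * Re (w x))" "integrable I01 (\<lambda>x. a x * Im (w x))"
    "integrable I01 (\<lambda>x. b x * Re (w x))" "integrable I01 (\<lambda>x. b x * Im (w x))"
    using a2 b2 L2_square_integrable_Re[OF w] L2_square_integrable_Im[OF w]
    by (auto intro!: integrable_mult_square_integrable)
  note parts = this Re_orth[OF aF a2] Re_orth[OF bF b2] Im_orth[OF aF a2] Im_orth[OF bF b2]
  have inner: "integrable I01 (\<lambda>x. f (\<phi> x) * cnj (w x))"
    using L2_inner_integrable[OF L2_comp[OF f] w] by simp
  have "Re (L2_inner (f \<circ> \<phi>) w) = integral\<^sup>L I01 (\<lambda>x. a x * Re (w x) + b x * Im (w x))"
    unfolding L2_inner_def comp_def integral_Re[OF inner, symmetric] by (simp add: a_def b_def)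
  also have "\<dots> = 0" using parts by simp
  finally have "Re (L2_inner (f \<circ> \<phi>) w) = 0" .
  moreover have "Im (L2_inner (f \<circ> \<phi>) w) = integral\<^sup>L I01 (\<lambda>x. b x * Re (w x) - a x * Im (w x))"
    unfolding L2_inner_def comp_def integral_Im[OF inner, symmetric] by (simp add: a_def b_def)
  moreover have "\<dots> = 0" using parts by simp
  ultimately show "L2_inner (f \<circ> \<phi>) w = 0" by (simp add: complex_eq_iff)
qed

lemma koopman_decomposition_exists:
  assumes g: "L2 g"
  shows "\<exists>h. L2 h \<and> (\<lambda>x. g x - h (\<phi> x)) \<in> koopman_perp \<phi>"
proof -
  interpret finite_measure_subalgebra I01 "koopman_algebra \<phi>"
    by (rule finite_measure_subalgebra_koopman)
  let ?E = "real_cond_exp I01 (koopman_algebra \<phi>)"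
  have [measurable]: "g \<in> borel_measurable I01" using g by (rule L2_measurable)
  have "(\<lambda>x. Re (g x)) \<in> borel_measurable I01" by measurable
  then obtain hr where hr: "hr \<in> borel_measurable I01" "integrable I01 (\<lambda>y. (hr y)\<^sup>2)"
    and Re_factor: "\<And>x. x \<in> {0..1} \<Longrightarrow> ?E (\<lambda>x. Re (g x)) x = hr (\<phi> x)"
    using L2_square_integrable_Re[OF g] by (rule real_cond_exp_koopman_factor) blast
  have "(\<lambda>x. Im (g x)) \<in> borel_measurable I01" by measurable
  then obtain hi where hi: "hi \<in> borel_measurable I01" "integrable I01 (\<lambda>y. (hi y)\<^sup>2)"
    and Im_factor: "\<And>x. x \<in> {0..1} \<Longrightarrow> ?E (\<lambda>x. Im (g x)) x = hi (\<phi> x)"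
    using L2_square_integrable_Im[OF g] by (rule real_cond_exp_koopman_factor) blast
  define h where "h y = complex_of_real (hr y) + \<i> * complex_of_real (hi y)" for y
  have "L2 h"
    unfolding L2_def h_def using hr hi by (simp add: cmod_power2)
  have residual_orthogonal: "integral\<^sup>L I01 (\<lambda>x. c x * (v x - ?E v x)) = 0"
    if "c \<in> borel_measurable (koopman_algebra \<phi>)" "integrable I01 (\<lambda>x. (c x)\<^sup>2)"
      "v \<in> borel_measurable I01" "integrable I01 (\<lambda>x. (v x)\<^sup>2)" for c v
  proof (rule real_cond_exp_residual_orthogonal)
    show "integrable I01 (\<lambda>x. c x * v x)"
      using that measurable_from_subalg[OF subalg] by (intro integrable_mult_square_integrable) auto
  qed (use that in auto)
  show ?thesis
  proof (intro exI conjI koopman_perpI)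
    show "L2 h" by fact
    show "L2 (\<lambda>x. g x - h (\<phi> x))" using L2_diff[OF g L2_comp[OF \<open>L2 h\<close>]] by simp
  next
    fix c :: "real \<Rightarrow> real"
    assume c: "c \<in> borel_measurable (koopman_algebra \<phi>)" "integrable I01 (\<lambda>x. (c x)\<^sup>2)"
    have "integral\<^sup>L I01 (\<lambda>x. c x * Re (g x - h (\<phi> x))) = integral\<^sup>L I01 (\<lambda>x. c x * (Re (g x) - ?E (\<lambda>x. Re (g x)) x))"
      by (rule Bochner_Integration.integral_cong) (simp_all add: h_def Re_factor)
    also have "\<dots> = 0"
      using c L2_square_integrable_Re[OF g] by (intro residual_orthogonal) simp_all
    finally show "integral\<^sup>L I01 (\<lambda>x. c x * Re (g x - h (\<phi> x))) = 0" .
  next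
    fix c :: "real \<Rightarrow> real"
    assume c: "c \<in> borel_measurable (koopman_algebra \<phi>)" "integrable I01 (\<lambda>x. (c x)\<^sup>2)"
    have "integral\<^sup>L I01 (\<lambda>x. c x * Im (g x - h (\<phi> x))) = integral\<^sup>L I01 (\<lambda>x. c x * (Im (g x) - ?E (\<lambda>x. Im (g x)) x))"
      by (rule Bochner_Integration.integral_cong) (simp_all add: h_def Im_factor)
    also have "\<dots> = 0"
      using c L2_square_integrable_Im[OF g] by (intro residual_orthogonal) simp_all
    finally show "integral\<^sup>L I01 (\<lambda>x. c x * Im (g x - h (\<phi> x))) = 0" .
  qed
qed

lemma L2_koopman_proj: "L2 g \<Longrightarrow> L2 (koopman_proj \<phi> g)"
  unfolding koopman_proj_def using someI_ex[OF koopman_decomposition_exists] by blast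

lemma koopman_proj_residual_perp: "L2 g \<Longrightarrow> (\<lambda>x. g x - koopman_proj \<phi> g (\<phi> x)) \<in> koopman_perp \<phi>"
  unfolding koopman_proj_def using someI_ex[OF koopman_decomposition_exists] by blast

lemma koopman_proj_eqI:
  "L2 g \<Longrightarrow> L2 h \<Longrightarrow> (\<lambda>x. g x - h (\<phi> x)) \<in> koopman_perp \<phi> \<Longrightarrow> ae_eq (koopman_proj \<phi> g) h"
  by (rule koopman_decomposition_unique[OF L2_koopman_proj _ koopman_proj_residual_perp])

lemma koopman_proj_comp: "L2 f \<Longrightarrow> ae_eq (koopman_proj \<phi> (f \<circ> \<phi>)) f"
  by (rule koopman_proj_eqI[OF L2_comp]) (simp_all add: koopman_perp_def L2_inner_def L2_zero)

lemma koopman_proj_perp: "g \<in> koopman_perp \<phi> \<Longrightarrow> ae_eq (koopman_proj \<phi> g) (\<lambda>x. 0)"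
  by (rule koopman_proj_eqI[OF koopman_perp_L2 L2_zero]) simp_all

lemma koopman_proj_ae_cong:
  assumes f: "L2 f" and g: "L2 g" and "ae_eq f g"
  shows "ae_eq (koopman_proj \<phi> f) (koopman_proj \<phi> g)"
proof (rule koopman_proj_eqI[OF f L2_koopman_proj[OF g]])
  show "(\<lambda>x. f x - koopman_proj \<phi> g (\<phi> x)) \<in> koopman_perp \<phi>"
  proof (rule koopman_perp_ae_cong[OF koopman_proj_residual_perp[OF g]])
    show "L2 (\<lambda>x. f x - koopman_proj \<phi> g (\<phi> x))"
      using L2_diff[OF f L2_comp[OF L2_koopman_proj[OF g]]] by simp
    show "ae_eq (\<lambda>x. g x - koopman_proj \<phi> g (\<phi> x)) (\<lambda>x. f x - koopman_proj \<phi> g (\<phi> x))"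
      using \<open>ae_eq f g\<close> unfolding ae_eq_def by (auto elim: AE_mp)
  qed
qed

lemma koopman_proj_lincomb:
  assumes f: "L2 f" and g: "L2 g"
  shows "ae_eq (koopman_proj \<phi> (\<lambda>x. a * f x + b * g x))
           (\<lambda>y. a * koopman_proj \<phi> f y + b * koopman_proj \<phi> g y)"
proof (rule koopman_proj_eqI)
  show "L2 (\<lambda>x. a * f x + b * g x)" using f g by (rule L2_lincomb)
  show "L2 (\<lambda>y. a * koopman_proj \<phi> f y + b * koopman_proj \<phi> g y)"
    using L2_koopman_proj[OF f] L2_koopman_proj[OF g] by (rule L2_lincomb)
  have "(\<lambda>x. a * (f x - koopman_proj \<phi> f (\<phi> x)) + b * (g x - koopman_proj \<phi> g (\<phi> x))) \<in> koopman_perp \<phi>"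
    using koopman_proj_residual_perp[OF f] koopman_proj_residual_perp[OF g] by (rule koopman_perp_lincomb)
  then show "(\<lambda>x. a * f x + b * g x - (a * koopman_proj \<phi> f (\<phi> x) + b * koopman_proj \<phi> g (\<phi> x)))
      \<in> koopman_perp \<phi>"
    by (simp add: algebra_simps)
qed

lemma L2_norm_koopman_proj_le:
  assumes g: "L2 g"
  shows "L2_norm (koopman_proj \<phi> g) \<le> L2_norm g"
proof -
  have "L2_inner (koopman_proj \<phi> g \<circ> \<phi>) (\<lambda>x. g x - (koopman_proj \<phi> g \<circ> \<phi>) x) = 0"
    using koopman_proj_residual_perp[OF g] L2_koopman_proj[OF g] unfolding koopman_perp_def by simp
  from L2_norm_le_of_orthogonal[OF g L2_comp[OF L2_koopman_proj[OF g]] this]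
  show ?thesis by (simp add: L2_norm_comp L2_koopman_proj g)
qed

lemma bounded_op_koopman_lift:
  assumes B: "bounded_op B"
  shows "bounded_op (koopman_lift \<phi> B)"
  unfolding bounded_op_def
proof (intro conjI allI impI)
  fix f assume "L2 f"
  then show "L2 (koopman_lift \<phi> B f)"
    unfolding koopman_lift_def by (intro L2_comp bounded_op_L2[OF B] L2_koopman_proj)
next
  fix f g assume "L2 f" "L2 g" "ae_eq f g"
  then show "ae_eq (koopman_lift \<phi> B f) (koopman_lift \<phi> B g)"
    unfolding koopman_lift_def
    by (intro ae_eq_comp bounded_op_L2[OF B] bounded_op_ae_cong[OF B] L2_koopman_proj koopman_proj_ae_cong)
next
  fix f g :: "real \<Rightarrow> complex" and a b :: complex
  assume f: "L2 f" and g: "L2 g"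
  let ?P = "koopman_proj \<phi>"
  have "ae_eq (B (?P (\<lambda>x. a * f x + b * g x))) (B (\<lambda>y. a * ?P f y + b * ?P g y))"
    using f g by (intro bounded_op_ae_cong[OF B] koopman_proj_lincomb L2_koopman_proj L2_lincomb)
  also have "ae_eq \<dots> (\<lambda>y. a * B (?P f) y + b * B (?P g) y)"
    using f g by (intro bounded_op_lincomb[OF B] L2_koopman_proj)
  finally have "ae_eq (B (?P (\<lambda>x. a * f x + b * g x)) \<circ> \<phi>) ((\<lambda>y. a * B (?P f) y + b * B (?P g) y) \<circ> \<phi>)"
    using f g by (intro ae_eq_comp bounded_op_L2[OF B] L2_lincomb L2_koopman_proj)
  then show "ae_eq (koopman_lift \<phi> B (\<lambda>x. a * f x + b * g x))
      (\<lambda>x. a * koopman_lift \<phi> B f x + b * koopman_lift \<phi> B g x)"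
    by (simp add: koopman_lift_def comp_def)
next
  obtain C where C: "\<And>f. L2 f \<Longrightarrow> L2_norm (B f) \<le> C * L2_norm f"
    using B unfolding bounded_op_def by blast
  show "\<exists>C. \<forall>f. L2 f \<longrightarrow> L2_norm (koopman_lift \<phi> B f) \<le> C * L2_norm f"
  proof (intro exI allI impI)
    fix f assume f: "L2 f"
    have "L2_norm (koopman_lift \<phi> B f) = L2_norm (B (koopman_proj \<phi> f))"
      unfolding koopman_lift_def using f by (intro L2_norm_comp bounded_op_L2[OF B] L2_koopman_proj)
    also have "\<dots> \<le> C * L2_norm (koopman_proj \<phi> f)"
      using f by (intro C L2_koopman_proj)
    also have "\<dots> \<le> max C 0 * L2_norm (koopman_proj \<phi> f)"
      by (intro mult_right_mono L2_norm_nonneg) simp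
    also have "\<dots> \<le> max C 0 * L2_norm f"
      using f by (intro mult_left_mono L2_norm_koopman_proj_le) simp_all
    finally show "L2_norm (koopman_lift \<phi> B f) \<le> max C 0 * L2_norm f" .
  qed
qed

lemma lifted_op_koopman_lift:
  assumes B: "bounded_op B"
  shows "lifted_op \<phi> B (koopman_lift \<phi> B)"
  unfolding lifted_op_def
proof (intro conjI allI impI ballI)
  show "bounded_op (koopman_lift \<phi> B)" using B by (rule bounded_op_koopman_lift)
next
  fix f assume f: "L2 f"
  then have "ae_eq (B (koopman_proj \<phi> (f \<circ> \<phi>))) (B f)"
    by (intro bounded_op_ae_cong[OF B] koopman_proj_comp L2_koopman_proj L2_comp)
  then show "ae_eq (koopman_lift \<phi> B (f \<circ> \<phi>)) (B f \<circ> \<phi>)"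
    unfolding koopman_lift_def using f by (intro ae_eq_comp bounded_op_L2[OF B] L2_koopman_proj L2_comp)
next
  fix g assume g: "g \<in> koopman_perp \<phi>"
  then have "ae_eq (B (koopman_proj \<phi> g)) (B (\<lambda>x. 0))"
    by (intro bounded_op_ae_cong[OF B] koopman_proj_perp L2_koopman_proj L2_zero koopman_perp_L2)
  also have "ae_eq (B (\<lambda>x. 0)) (\<lambda>x. 0)" using B by (rule bounded_op_zero)
  finally have "ae_eq (B (koopman_proj \<phi> g) \<circ> \<phi>) ((\<lambda>x. 0) \<circ> \<phi>)"
    using g by (intro ae_eq_comp bounded_op_L2[OF B] L2_koopman_proj L2_zero koopman_perp_L2)
  then show "ae_eq (koopman_lift \<phi> B g) (\<lambda>x. 0)"
    by (simp add: koopman_lift_def comp_def)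
qed

lemma lifted_op_unique:
  assumes B'': "lifted_op \<phi> B B''" and f: "L2 f"
  shows "ae_eq (B'' f) (koopman_lift \<phi> B f)"
proof -
  have bounded: "bounded_op B''"
    and on_range: "\<And>f. L2 f \<Longrightarrow> ae_eq (B'' (f \<circ> \<phi>)) (B f \<circ> \<phi>)"
    and on_perp: "\<And>g. g \<in> koopman_perp \<phi> \<Longrightarrow> ae_eq (B'' g) (\<lambda>x. 0)"
    using B'' unfolding lifted_op_def by blast+
  define u where "u x = f x - koopman_proj \<phi> f (\<phi> x)" for x
  have u: "u \<in> koopman_perp \<phi>" unfolding u_def using f by (rule koopman_proj_residual_perp)
  have "(\<lambda>x. 1 * (koopman_proj \<phi> f \<circ> \<phi>) x + 1 * u x) = f" by (simp add: u_def)
  then have "ae_eq (B'' f) (\<lambda>x. 1 * B'' (koopman_proj \<phi> f \<circ> \<phi>) x + 1 * B'' u x)"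
    using bounded_op_lincomb[OF bounded L2_comp[OF L2_koopman_proj[OF f]] koopman_perp_L2[OF u]]
    by metis
  moreover have "ae_eq (B'' (koopman_proj \<phi> f \<circ> \<phi>)) (koopman_lift \<phi> B f)"
    unfolding koopman_lift_def using L2_koopman_proj[OF f] by (rule on_range)
  moreover have "ae_eq (B'' u) (\<lambda>x. 0)" using u by (rule on_perp)
  ultimately show ?thesis unfolding ae_eq_def by eventually_elim simp
qed

end

theorem lemma2p6:
  fixes \<phi> :: "real \<Rightarrow> real"
    and B :: "(real \<Rightarrow> complex) \<Rightarrow> (real \<Rightarrow> complex)"
  assumes "meas_pres \<phi>"
    and "bounded_op B"
  shows "\<exists>B'. lifted_op \<phi> B B' \<and>
           (\<forall>B''. lifted_op \<phi> B B'' \<longrightarrow> (\<forall>f. L2 f \<longrightarrow> ae_eq (B'' f) (B' f)))"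
proof (intro exI conjI allI impI)
  show "lifted_op \<phi> B (koopman_lift \<phi> B)" using assms by (rule lifted_op_koopman_lift)
  fix B'' f assume "lifted_op \<phi> B B''" "L2 f"
  with assms(1) show "ae_eq (B'' f) (koopman_lift \<phi> B f)" by (rule lifted_op_unique)
qed

end
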